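(* There are universal constants $0<c_1\le c_2$ such that for all positive integers $m$ and all $p,q\in[0,1]$, \[ c_1\min\left(m|p-q|,\frac{\sqrt m\,|p-q|}{\sqrt{p(1-p)}},1\right)\le \ell_1(\mathrm{Bin}(m,p),\mathrm{Bin}(m,q))\le c_2\min\left(m|p-q|,\frac{\sqrt m\,|p-q|}{\sqrt{p(1-p)}},1\right). \]
   Context: $\ell_1(P,Q)=\sum_x|P(x)-Q(x)|$ for distributions on $\{0,1,\dots,m\}$, and $\mathrm{Bin}(m,p)$ is the binomial distribution. When $p(1-p)=0$ the middle term is interpreted as $+\infty$ if $p\neq q$ (and $0$ if $p=q$). *)

theory Defs
  imports "HOL-Probability.Probability"
begin

definition l1_dist :: "nat \<Rightarrow> nat pmf \<Rightarrow> nat pmf \<Rightarrow> real" where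
  "l1_dist m P Q = (\<Sum>x\<in>{0..m}. \<bar>pmf P x - pmf Q x\<bar>)"

definition mid_term :: "nat \<Rightarrow> real \<Rightarrow> real \<Rightarrow> ereal" where
  "mid_term m p q =
     (if p = q then 0
      else if p * (1 - p) = 0 then \<infinity>
      else ereal (sqrt (real m) * \<bar>p - q\<bar> / sqrt (p * (1 - p))))"

definition bin_rate :: "nat \<Rightarrow> real \<Rightarrow> real \<Rightarrow> ereal" where
  "bin_rate m p q = min (ereal (real m * \<bar>p - q\<bar>)) (min (mid_term m p q) 1)"

end

theory Submission
  imports Defs
begin

text \<open>
  Write \<open>L\<close> for the \<open>\<ell>\<^sub>1\<close> distance, \<open>d = |p - q|\<close> and \<open>\<sigma>\<^sup>2 = m p (1 - p)\<close>. For a test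
  function \<open>w\<close> the mean \<open>E\<^sub>s w\<close> of \<open>w\<close> under \<open>Bin(m, s)\<close> is a Bernstein polynomial in \<open>s\<close>,
  whose derivative is \<open>m\<close> times the Bernstein polynomial of the increments of \<open>w\<close>.

  Upper bounds: trivially \<open>L \<le> 2\<close>; taking for \<open>w\<close> the signs of the differences of the two
  mass functions gives \<open>L = E\<^sub>p w - E\<^sub>q w \<le> 2 m d\<close>; and by Cauchy-Schwarz \<open>L\<^sup>2\<close> is at most
  the \<open>\<chi>\<^sup>2\<close>-divergence \<open>(1 + d\<^sup>2 / (p (1 - p)))\<^sup>m - 1\<close>, which is \<open>O(m d\<^sup>2 / (p (1 - p)))\<close>
  as long as this quantity is small.

  Lower bound: let \<open>w\<close> rise linearly from \<open>-1\<close> to \<open>1\<close> on a window of half-width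
  \<open>W = max 16 (8 \<sigma>)\<close> around the mean \<open>m p\<close>. By Chebyshev's inequality, for every \<open>s\<close> within
  \<open>W / (4 m)\<close> of \<open>p\<close> half of the mass of \<open>Bin(m - 1, s)\<close> lies where the increments of \<open>w\<close>
  equal \<open>1 / W\<close>, so \<open>s \<mapsto> E\<^sub>s w\<close> is nondecreasing with slope at least \<open>m / (2 W)\<close> there.
  Hence \<open>L \<ge> |E\<^sub>q w - E\<^sub>p w| \<ge> min (m d / (2 W)) (1 / 8)\<close>.
\<close>

section \<open>Two consequences of the mean value theorem\<close>

lemma DERIV_ge_imp_diff_ge:
  fixes f f' :: "real \<Rightarrow> real"
  assumes "a \<le> b"
    and "\<And>x. a \<le> x \<Longrightarrow> x \<le> b \<Longrightarrow> (f has_real_derivative f' x) (at x)"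
    and "\<And>x. a \<le> x \<Longrightarrow> x \<le> b \<Longrightarrow> c \<le> f' x"
  shows "c * (b - a) \<le> f b - f a"
proof -
  have "f a - c * a \<le> f b - c * b"
  proof (rule DERIV_nonneg_imp_nondecreasing[OF assms(1)])
    fix x assume "a \<le> x" "x \<le> b"
    then show "\<exists>y. ((\<lambda>x. f x - c * x) has_real_derivative y) (at x) \<and> 0 \<le> y"
      using assms(2,3) by (intro exI[of _ "f' x - c"]) (auto intro!: derivative_eq_intros)
  qed
  then show ?thesis
    by (simp add: algebra_simps)
qed

lemma DERIV_steep_near_imp_abs_diff_ge:
  fixes f f' :: "real \<Rightarrow> real"
  assumes deriv: "\<And>x. (f has_real_derivative f' x) (at x)"
    and nonneg: "\<And>x. min p q \<le> x \<Longrightarrow> x \<le> max p q \<Longrightarrow> 0 \<le> f' x"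
    and steep: "\<And>x. min p q \<le> x \<Longrightarrow> x \<le> max p q \<Longrightarrow> \<bar>x - p\<bar> \<le> r \<Longrightarrow> c \<le> f' x"
    and "0 \<le> r"
  shows "c * min \<bar>q - p\<bar> r \<le> \<bar>f q - f p\<bar>"
proof (cases "p \<le> q")
  case True
  define q' where "q' = min q (p + r)"
  have "c * (q' - p) \<le> f q' - f p"
    using True \<open>0 \<le> r\<close> by (intro DERIV_ge_imp_diff_ge[where f' = f'] deriv steep) (auto simp: q'_def)
  moreover have "0 * (q - q') \<le> f q - f q'"
    using True \<open>0 \<le> r\<close> by (intro DERIV_ge_imp_diff_ge[where f' = f'] deriv nonneg) (auto simp: q'_def)
  moreover have "q' - p = min \<bar>q - p\<bar> r"
    using True by (simp add: q'_def)
  ultimately show ?thesis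
    by simp
next
  case False
  define q' where "q' = max q (p - r)"
  have "c * (p - q') \<le> f p - f q'"
    using False \<open>0 \<le> r\<close> by (intro DERIV_ge_imp_diff_ge[where f' = f'] deriv steep) (auto simp: q'_def)
  moreover have "0 * (q' - q) \<le> f q' - f q"
    using False \<open>0 \<le> r\<close> by (intro DERIV_ge_imp_diff_ge[where f' = f'] deriv nonneg) (auto simp: q'_def)
  moreover have "p - q' = min \<bar>q - p\<bar> r"
    using False by (simp add: q'_def)
  ultimately show ?thesis
    by simp
qed

section \<open>Bernstein polynomials\<close>

definition bernstein_poly :: "nat \<Rightarrow> (nat \<Rightarrow> real) \<Rightarrow> real \<Rightarrow> real" where
  "bernstein_poly n w x = (\<Sum>k\<le>n. w k * Bernstein n k x)"

lemma Bernstein_eq_0: "n < k \<Longrightarrow> Bernstein n k x = 0"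
  by (simp add: Bernstein_def)

lemma Bernstein_Suc_has_derivative:
  "(Bernstein (Suc n) k has_real_derivative
     real (Suc n) * ((if k = 0 then 0 else Bernstein n (k - 1) x) - Bernstein n k x)) (at x)"
proof (rule DERIV_cong)
  show "(Bernstein (Suc n) k has_real_derivative
      (real k * real (Suc n choose k)) * x ^ (k - 1) * (1 - x) ^ (Suc n - k)
        - (real (Suc n - k) * real (Suc n choose k)) * x ^ k * (1 - x) ^ (n - k)) (at x)"
    unfolding Bernstein_def[abs_def]
    by (auto intro!: derivative_eq_intros simp: algebra_simps Suc_diff_le)
  have absorb: "real (Suc n - k) * real (Suc n choose k) = real (Suc n) * real (n choose k)"
    using binomial_absorb_comp[of "Suc n" k] by (metis diff_Suc_1 of_nat_mult)
  show "(real k * real (Suc n choose k)) * x ^ (k - 1) * (1 - x) ^ (Suc n - k)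
        - (real (Suc n - k) * real (Suc n choose k)) * x ^ k * (1 - x) ^ (n - k)
      = real (Suc n) * ((if k = 0 then 0 else Bernstein n (k - 1) x) - Bernstein n k x)"
  proof (cases k)
    case 0
    then show ?thesis by (simp add: Bernstein_def)
  next
    case (Suc j)
    have "real k * real (Suc n choose k) = real (Suc n) * real (n choose j)"
      using Suc_times_binomial_eq[of n j] unfolding Suc by (metis mult.commute of_nat_mult)
    then show ?thesis
      unfolding absorb by (simp add: Bernstein_def Suc algebra_simps)
  qed
qed

lemma bernstein_poly_Suc_has_derivative:
  "(bernstein_poly (Suc n) w has_real_derivative
     real (Suc n) * bernstein_poly n (\<lambda>j. w (Suc j) - w j) x) (at x)"
proof -
  define D where "D k = (if k = 0 then 0 else Bernstein n (k - 1) x) - Bernstein n k x" for k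
  have "(\<Sum>k\<le>Suc n. w k * (if k = 0 then 0 else Bernstein n (k - 1) x))
      = (\<Sum>j\<le>n. w (Suc j) * Bernstein n j x)"
    by (simp add: sum.atMost_Suc_shift del: sum.atMost_Suc)
  moreover have "(\<Sum>k\<le>Suc n. w k * Bernstein n k x) = (\<Sum>k\<le>n. w k * Bernstein n k x)"
    by (simp add: Bernstein_eq_0)
  ultimately have "(\<Sum>k\<le>Suc n. w k * D k) = bernstein_poly n (\<lambda>j. w (Suc j) - w j) x"
    by (simp add: D_def bernstein_poly_def right_diff_distrib left_diff_distrib sum_subtractf)
  moreover have "(bernstein_poly (Suc n) w has_real_derivative
      (\<Sum>k\<le>Suc n. w k * (real (Suc n) * D k))) (at x)"
    unfolding bernstein_poly_def[abs_def] D_def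
    by (intro DERIV_sum DERIV_cmult Bernstein_Suc_has_derivative)
  ultimately show ?thesis
    by (metis (no_types, lifting) mult.left_commute sum.cong sum_distrib_left)
qed

lemma bernstein_poly_nonneg:
  assumes "0 \<le> x" "x \<le> 1" "\<And>k. k \<le> n \<Longrightarrow> 0 \<le> w k"
  shows "0 \<le> bernstein_poly n w x"
  unfolding bernstein_poly_def using assms by (intro sum_nonneg mult_nonneg_nonneg Bernstein_nonneg) auto

lemma abs_bernstein_poly_le:
  assumes "0 \<le> x" "x \<le> 1" "\<And>k. k \<le> n \<Longrightarrow> \<bar>w k\<bar> \<le> B"
  shows "\<bar>bernstein_poly n w x\<bar> \<le> B"
proof -
  have "\<bar>bernstein_poly n w x\<bar> \<le> (\<Sum>k\<le>n. \<bar>w k\<bar> * Bernstein n k x)"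
    unfolding bernstein_poly_def using assms(1,2)
    by (intro order_trans[OF sum_abs] sum_mono) (simp add: abs_mult Bernstein_nonneg)
  also have "\<dots> \<le> (\<Sum>k\<le>n. B * Bernstein n k x)"
    using assms by (intro sum_mono mult_right_mono Bernstein_nonneg) auto
  finally show ?thesis
    by (simp flip: sum_distrib_left)
qed

lemma sum_Bernstein_variance:
  "(\<Sum>k\<le>n. (real k - real n * x)\<^sup>2 * Bernstein n k x) = real n * x * (1 - x)"
proof -
  have *: "\<And>a b x::real. (a - b)\<^sup>2 * x = a * (a - 1) * x + (1 - 2 * b) * a * x + b * b * x"
    by (simp add: algebra_simps power2_eq_square)
  show ?thesis
    by ((simp add: * sum.distrib), (simp flip: sum_distrib_left add: mult.assoc),
        (simp add: algebra_simps power2_eq_square))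
qed

lemma Bernstein_mass_near_mean:
  assumes "0 \<le> x" "x \<le> 1" "0 < t"
  shows "1 - real n * x * (1 - x) / t\<^sup>2 \<le> (\<Sum>k | k \<le> n \<and> \<bar>real k - real n * x\<bar> < t. Bernstein n k x)"
proof -
  define A where "A = {k. k \<le> n \<and> \<bar>real k - real n * x\<bar> < t}"
  have "(\<Sum>k\<in>{..n} - A. Bernstein n k x) \<le> (\<Sum>k\<in>{..n} - A. (real k - real n * x)\<^sup>2 / t\<^sup>2 * Bernstein n k x)"
  proof (rule sum_mono)
    fix k assume "k \<in> {..n} - A"
    then have "\<bar>t\<bar> \<le> \<bar>real k - real n * x\<bar>"
      using assms(3) by (auto simp: A_def)
    then have "t\<^sup>2 \<le> (real k - real n * x)\<^sup>2"
      by (simp only: abs_le_square_iff)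
    then have "1 \<le> (real k - real n * x)\<^sup>2 / t\<^sup>2"
      using assms(3) by simp
    from mult_right_mono[OF this Bernstein_nonneg[OF assms(1,2)]]
    show "Bernstein n k x \<le> (real k - real n * x)\<^sup>2 / t\<^sup>2 * Bernstein n k x"
      by simp
  qed
  also have "\<dots> \<le> (\<Sum>k\<le>n. (real k - real n * x)\<^sup>2 / t\<^sup>2 * Bernstein n k x)"
    using assms by (intro sum_mono2) (auto intro!: divide_nonneg_nonneg mult_nonneg_nonneg Bernstein_nonneg)
  also have "\<dots> = real n * x * (1 - x) / t\<^sup>2"
    by (simp add: sum_divide_distrib[symmetric] sum_Bernstein_variance)
  finally have "(\<Sum>k\<in>{..n} - A. Bernstein n k x) \<le> real n * x * (1 - x) / t\<^sup>2" .
  moreover have "(\<Sum>k\<in>A. Bernstein n k x) + (\<Sum>k\<in>{..n} - A. Bernstein n k x) = 1"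
    using sum.subset_diff[of A "{..n}" "\<lambda>k. Bernstein n k x"] by (auto simp: A_def add.commute)
  ultimately show ?thesis
    unfolding A_def by linarith
qed

section \<open>Upper bounds\<close>

lemma l1_dist_le_2: "l1_dist m P Q \<le> 2"
proof -
  have "l1_dist m P Q \<le> (\<Sum>k\<in>{0..m}. pmf P k + pmf Q k)"
    unfolding l1_dist_def by (intro sum_mono) (simp add: abs_le_iff)
  also have "\<dots> = measure_pmf.prob P {0..m} + measure_pmf.prob Q {0..m}"
    by (simp add: sum.distrib measure_measure_pmf_finite)
  also have "\<dots> \<le> 2"
    using measure_pmf.prob_le_1[of P "{0..m}"] measure_pmf.prob_le_1[of Q "{0..m}"] by linarith
  finally show ?thesis .
qed

lemma l1_dist_binomial:
  assumes "p \<in> {0..1}" "q \<in> {0..1}"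
  shows "l1_dist m (binomial_pmf m p) (binomial_pmf m q) = (\<Sum>k\<le>m. \<bar>Bernstein m k p - Bernstein m k q\<bar>)"
  using assms by (simp add: l1_dist_def atLeast0AtMost Bernstein_def)

lemma bernstein_poly_diff_le_l1_dist_binomial:
  assumes "p \<in> {0..1}" "q \<in> {0..1}" "\<And>k. k \<le> m \<Longrightarrow> \<bar>w k\<bar> \<le> 1"
  shows "\<bar>bernstein_poly m w p - bernstein_poly m w q\<bar> \<le> l1_dist m (binomial_pmf m p) (binomial_pmf m q)"
proof -
  have "\<bar>bernstein_poly m w p - bernstein_poly m w q\<bar> = \<bar>\<Sum>k\<le>m. w k * (Bernstein m k p - Bernstein m k q)\<bar>"
    by (simp add: bernstein_poly_def right_diff_distrib sum_subtractf)
  also have "\<dots> \<le> (\<Sum>k\<le>m. \<bar>w k\<bar> * \<bar>Bernstein m k p - Bernstein m k q\<bar>)"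
    by (rule order_trans[OF sum_abs]) (simp add: abs_mult)
  also have "\<dots> \<le> (\<Sum>k\<le>m. \<bar>Bernstein m k p - Bernstein m k q\<bar>)"
    using assms(3) by (intro sum_mono mult_left_le_one_le) auto
  finally show ?thesis
    using assms(1,2) by (simp add: l1_dist_binomial)
qed

lemma l1_dist_binomial_eq_bernstein_poly_diff:
  assumes "p \<in> {0..1}" "q \<in> {0..1}"
  obtains w where "\<And>k. \<bar>w k\<bar> \<le> 1"
    and "l1_dist m (binomial_pmf m p) (binomial_pmf m q) = bernstein_poly m w p - bernstein_poly m w q"
proof
  define w where "w k = sgn (Bernstein m k p - Bernstein m k q)" for k
  show "\<bar>w k\<bar> \<le> 1" for k
    by (simp add: w_def abs_sgn_eq)
  show "l1_dist m (binomial_pmf m p) (binomial_pmf m q) = bernstein_poly m w p - bernstein_poly m w q"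
  proof -
    have "l1_dist m (binomial_pmf m p) (binomial_pmf m q) = (\<Sum>k\<le>m. w k * (Bernstein m k p - Bernstein m k q))"
      using assms by (simp add: l1_dist_binomial w_def abs_sgn mult.commute)
    then show ?thesis
      by (simp add: bernstein_poly_def right_diff_distrib sum_subtractf)
  qed
qed

lemma l1_dist_binomial_le_linear:
  assumes "p \<in> {0..1}" "q \<in> {0..1}"
  shows "l1_dist m (binomial_pmf m p) (binomial_pmf m q) \<le> 2 * real m * \<bar>p - q\<bar>"
proof (cases m)
  case 0
  then show ?thesis
    using assms by (simp add: l1_dist_binomial Bernstein_def)
next
  case (Suc n)
  obtain w where w: "\<And>k. \<bar>w k\<bar> \<le> 1"
    and l1: "l1_dist m (binomial_pmf m p) (binomial_pmf m q) = bernstein_poly m w p - bernstein_poly m w q"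
    using l1_dist_binomial_eq_bernstein_poly_diff[where m = m, OF assms] by blast
  have deriv: "(bernstein_poly m w has_real_derivative
      real m * bernstein_poly n (\<lambda>j. w (Suc j) - w j) x) (at x within {0..1})" for x
    unfolding Suc by (rule has_field_derivative_at_within, rule bernstein_poly_Suc_has_derivative)
  have "\<bar>w (Suc j) - w j\<bar> \<le> 2" for j
    using w[of j] w[of "Suc j"] unfolding abs_le_iff by linarith
  then have "\<bar>real m * bernstein_poly n (\<lambda>j. w (Suc j) - w j) x\<bar> \<le> 2 * real m" if "x \<in> {0..1}" for x
  proof -
    have "\<bar>bernstein_poly n (\<lambda>j. w (Suc j) - w j) x\<bar> \<le> 2"
      using that \<open>\<And>j. \<bar>w (Suc j) - w j\<bar> \<le> 2\<close> by (intro abs_bernstein_poly_le) auto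
    then show ?thesis
      by (simp add: abs_mult mult.commute mult_left_mono)
  qed
  then have "norm (bernstein_poly m w p - bernstein_poly m w q) \<le> 2 * real m * norm (p - q)"
    using assms by (intro field_differentiable_bound[OF convex_real_interval(5) deriv]) auto
  then show ?thesis
    using l1 by simp
qed

lemma l1_sq_le_chi_square:
  fixes P Q :: "'a \<Rightarrow> real"
  assumes "\<And>k. k \<in> A \<Longrightarrow> 0 < P k" "sum P A = 1" "sum Q A = 1"
  shows "(\<Sum>k\<in>A. \<bar>P k - Q k\<bar>)\<^sup>2 \<le> (\<Sum>k\<in>A. (Q k)\<^sup>2 / P k) - 1"
proof -
  have "(\<Sum>k\<in>A. \<bar>P k - Q k\<bar>)\<^sup>2 = (\<Sum>k\<in>A. sqrt (P k) * (\<bar>P k - Q k\<bar> / sqrt (P k)))\<^sup>2"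
    using assms(1) by (intro arg_cong[where f = "\<lambda>x. x\<^sup>2"] sum.cong) (auto simp: less_imp_neq[symmetric])
  also have "\<dots> \<le> (\<Sum>k\<in>A. (sqrt (P k))\<^sup>2) * (\<Sum>k\<in>A. (\<bar>P k - Q k\<bar> / sqrt (P k))\<^sup>2)"
    by (rule Cauchy_Schwarz_ineq_sum)
  also have "(\<Sum>k\<in>A. (sqrt (P k))\<^sup>2) = 1"
    using assms(1,2) by (simp add: less_imp_le)
  also have "(\<Sum>k\<in>A. (\<bar>P k - Q k\<bar> / sqrt (P k))\<^sup>2) = (\<Sum>k\<in>A. (Q k)\<^sup>2 / P k - 2 * Q k + P k)"
  proof (rule sum.cong)
    fix k assume "k \<in> A"
    then have "P k > 0"
      by (rule assms(1))
    then show "(\<bar>P k - Q k\<bar> / sqrt (P k))\<^sup>2 = (Q k)\<^sup>2 / P k - 2 * Q k + P k"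
      by (simp add: power_divide less_imp_le) (simp add: field_simps power2_eq_square)
  qed simp
  also have "\<dots> = (\<Sum>k\<in>A. (Q k)\<^sup>2 / P k) - 1"
    using assms(2,3) by (simp add: sum.distrib sum_subtractf flip: sum_distrib_left)
  finally show ?thesis
    by simp
qed

lemma Bernstein_sq_div_Bernstein:
  assumes "0 < p" "p < 1" "k \<le> m"
  shows "(Bernstein m k q)\<^sup>2 / Bernstein m k p
      = real (m choose k) * (q\<^sup>2 / p) ^ k * ((1 - q)\<^sup>2 / (1 - p)) ^ (m - k)"
proof -
  have "(Bernstein m k q)\<^sup>2 = real (m choose k) * real (m choose k) * (q\<^sup>2) ^ k * ((1 - q)\<^sup>2) ^ (m - k)"
    by (simp add: Bernstein_def power_mult_distrib power2_eq_square flip: power_mult)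
  moreover have "Bernstein m k p = real (m choose k) * p ^ k * (1 - p) ^ (m - k)" "real (m choose k) > 0"
    using assms by (auto simp: Bernstein_def)
  ultimately show ?thesis
    using assms by (simp add: power_divide)
qed

lemma sum_Bernstein_sq_div_Bernstein:
  assumes "0 < p" "p < 1"
  shows "(\<Sum>k\<le>m. (Bernstein m k q)\<^sup>2 / Bernstein m k p) = (1 + (q - p)\<^sup>2 / (p * (1 - p))) ^ m"
proof -
  have "(1 + (q - p)\<^sup>2 / (p * (1 - p))) ^ m = (q\<^sup>2 / p + (1 - q)\<^sup>2 / (1 - p)) ^ m"
    using assms by (simp add: field_simps power2_eq_square)
  also have "(q\<^sup>2 / p + (1 - q)\<^sup>2 / (1 - p)) ^ m
      = (\<Sum>k\<le>m. real (m choose k) * (q\<^sup>2 / p) ^ k * ((1 - q)\<^sup>2 / (1 - p)) ^ (m - k))"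
    by (rule binomial_ring)
  finally show ?thesis
    using assms by (simp add: Bernstein_sq_div_Bernstein)
qed

lemma one_plus_power_le:
  fixes a :: real
  assumes "0 \<le> a" "real m * a \<le> 1/2"
  shows "(1 + a) ^ m \<le> 1 + 2 * real m * a"
proof -
  have "(1 + a) ^ m \<le> exp a ^ m"
    using assms by (intro power_mono exp_ge_add_one_self) auto
  also have "\<dots> = exp (real m * a)"
    by (simp add: exp_of_nat_mult)
  also have "\<dots> \<le> 1 + 2 * (real m * a)"
    using exp_bound_lemma[of "real m * a"] assms by simp
  finally show ?thesis
    by simp
qed

lemma l1_dist_binomial_le_sqrt:
  assumes "0 < p" "p < 1" "q \<in> {0..1}"
  shows "l1_dist m (binomial_pmf m p) (binomial_pmf m q)
    \<le> 3 * (sqrt (real m) * \<bar>p - q\<bar> / sqrt (p * (1 - p)))"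
proof -
  define L where "L = l1_dist m (binomial_pmf m p) (binomial_pmf m q)"
  define x where "x = sqrt (real m) * \<bar>p - q\<bar> / sqrt (p * (1 - p))"
  define a where "a = (q - p)\<^sup>2 / (p * (1 - p))"
  have "x\<^sup>2 = real m * a"
    using assms by (simp add: x_def a_def power_divide power_mult_distrib power2_commute)
  have "0 \<le> a" "0 \<le> x" "0 \<le> L"
    using assms by (auto simp: a_def x_def L_def l1_dist_def)
  have "L\<^sup>2 \<le> (3 * x)\<^sup>2"
  proof (cases "x\<^sup>2 \<le> 1/2")
    case True
    have "L\<^sup>2 \<le> (1 + a) ^ m - 1"
      using assms l1_sq_le_chi_square[of "{..m}" "\<lambda>k. Bernstein m k p" "\<lambda>k. Bernstein m k q"]
      by (simp add: L_def a_def l1_dist_binomial Bernstein_pos sum_Bernstein_sq_div_Bernstein)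
    also have "\<dots> \<le> 2 * x\<^sup>2"
      using one_plus_power_le[of a m] True \<open>0 \<le> a\<close> \<open>x\<^sup>2 = real m * a\<close> by simp
    also have "\<dots> \<le> (3 * x)\<^sup>2"
      by (simp add: power_mult_distrib)
    finally show ?thesis .
  next
    case False
    have "L\<^sup>2 \<le> 2\<^sup>2"
      using \<open>0 \<le> L\<close> l1_dist_le_2 unfolding L_def by (intro power_mono) auto
    also have "\<dots> \<le> (3 * x)\<^sup>2"
      using False by (simp add: power_mult_distrib)
    finally show ?thesis .
  qed
  then have "L \<le> 3 * x"
    by (rule power2_le_imp_le) (simp add: \<open>0 \<le> x\<close>)
  then show ?thesis
    unfolding L_def x_def .
qed

section \<open>Lower bound\<close>

definition ramp :: "real \<Rightarrow> real \<Rightarrow> nat \<Rightarrow> real" where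
  "ramp c W k = max (-1) (min 1 ((real k - c) / W))"

lemma abs_ramp_le: "\<bar>ramp c W k\<bar> \<le> 1"
  by (simp add: ramp_def)

lemma ramp_le_Suc: "0 < W \<Longrightarrow> ramp c W k \<le> ramp c W (Suc k)"
  unfolding ramp_def by (intro max.mono min.mono order_refl divide_right_mono) auto

lemma ramp_Suc_diff:
  assumes "0 < W" "c - W \<le> real k" "real k + 1 \<le> c + W"
  shows "ramp c W (Suc k) - ramp c W k = 1 / W"
proof -
  have "ramp c W k = (real k - c) / W" "ramp c W (Suc k) = (real k + 1 - c) / W"
    using assms by (auto simp: ramp_def field_simps)
  then show ?thesis
    by (simp add: diff_divide_distrib[symmetric])
qed

lemma mult_one_minus_le:
  fixes p s :: real
  assumes "p \<in> {0..1}" "s \<in> {0..1}"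
  shows "s * (1 - s) \<le> p * (1 - p) + \<bar>s - p\<bar>"
proof -
  have "\<bar>1 - s - p\<bar> \<le> 1"
    using assms by auto
  then have "\<bar>(s - p) * (1 - s - p)\<bar> \<le> \<bar>s - p\<bar>"
    by (simp add: abs_mult mult_left_le)
  moreover have "s * (1 - s) - p * (1 - p) = (s - p) * (1 - s - p)"
    by (simp add: algebra_simps)
  ultimately show ?thesis
    by linarith
qed

lemma Bernstein_mass_near_mean_ge_half:
  assumes "p \<in> {0..1}" "s \<in> {0..1}" "16 \<le> W" "8 * sqrt (real (Suc n) * (p * (1 - p))) \<le> W"
    and "real (Suc n) * \<bar>s - p\<bar> \<le> W / 4"
  shows "1/2 \<le> (\<Sum>k | k \<le> n \<and> \<bar>real k - real n * s\<bar> < W / 4. Bernstein n k s)"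
proof -
  have "real n * (s * (1 - s)) \<le> real (Suc n) * (p * (1 - p) + \<bar>s - p\<bar>)"
    using assms(1,2) mult_one_minus_le[OF assms(1,2)] by (intro mult_mono) auto
  then have "real n * s * (1 - s) \<le> real (Suc n) * (p * (1 - p)) + W / 4"
    using assms(5) by (simp add: algebra_simps)
  then have "real n * s * (1 - s) / (W / 4)\<^sup>2 \<le> (real (Suc n) * (p * (1 - p)) + W / 4) / (W / 4)\<^sup>2"
    by (intro divide_right_mono) auto
  also have "\<dots> = 16 * (real (Suc n) * (p * (1 - p))) / W\<^sup>2 + 4 / W"
    using assms(3) by (simp add: field_simps power2_eq_square)
  also have "\<dots> \<le> 1/4 + 1/4"
  proof -
    have "(8 * sqrt (real (Suc n) * (p * (1 - p))))\<^sup>2 \<le> W\<^sup>2"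
      using assms(4) by (rule power_mono) (use assms(1) in simp)
    then have "64 * (real (Suc n) * (p * (1 - p))) \<le> W\<^sup>2"
      using assms(1) by (simp add: power_mult_distrib)
    then show ?thesis
      using assms(3) by (intro add_mono) (simp_all add: field_simps)
  qed
  finally have "real n * s * (1 - s) / (W / 4)\<^sup>2 \<le> 1/2"
    by simp
  moreover have "1 - real n * s * (1 - s) / (W / 4)\<^sup>2
      \<le> (\<Sum>k | k \<le> n \<and> \<bar>real k - real n * s\<bar> < W / 4. Bernstein n k s)"
    using assms(2,3) by (intro Bernstein_mass_near_mean) auto
  ultimately show ?thesis
    by linarith
qed

lemma bernstein_poly_ramp_diff_ge:
  assumes "p \<in> {0..1}" "s \<in> {0..1}" "16 \<le> W" "8 * sqrt (real (Suc n) * (p * (1 - p))) \<le> W"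
    and "real (Suc n) * \<bar>s - p\<bar> \<le> W / 4"
  defines "c \<equiv> real (Suc n) * p"
  shows "1 / (2 * W) \<le> bernstein_poly n (\<lambda>j. ramp c W (Suc j) - ramp c W j) s"
proof -
  define A where "A = {k. k \<le> n \<and> \<bar>real k - real n * s\<bar> < W / 4}"
  have step: "ramp c W (Suc k) - ramp c W k = 1 / W" if "k \<in> A" for k
  proof (rule ramp_Suc_diff)
    have "real n * s + s - c = real (Suc n) * (s - p)"
      by (simp add: c_def algebra_simps)
    then have "\<bar>real n * s + s - c\<bar> \<le> W / 4"
      using assms(5) by (simp only: abs_mult abs_of_nat)
    moreover have "\<bar>real k - real n * s\<bar> < W / 4"
      using that by (simp add: A_def)
    ultimately show "c - W \<le> real k" "real k + 1 \<le> c + W"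
      using assms(2,3) unfolding abs_le_iff abs_less_iff by auto
  qed (use assms(3) in simp)
  have "1 / (2 * W) \<le> (\<Sum>k\<in>A. Bernstein n k s) / W"
    using Bernstein_mass_near_mean_ge_half[OF assms(1-5)] assms(3) by (simp add: A_def field_simps)
  also have "\<dots> = (\<Sum>k\<in>A. (ramp c W (Suc k) - ramp c W k) * Bernstein n k s)"
    by (simp add: step sum_divide_distrib)
  also have "\<dots> \<le> bernstein_poly n (\<lambda>j. ramp c W (Suc j) - ramp c W j) s"
    unfolding bernstein_poly_def using assms(2,3)
    by (intro sum_mono2) (auto simp: A_def ramp_le_Suc intro!: mult_nonneg_nonneg Bernstein_nonneg)
  finally show ?thesis .
qed

lemma l1_dist_binomial_ge:
  assumes "p \<in> {0..1}" "q \<in> {0..1}" "0 < m" "16 \<le> W" "8 * sqrt (real m * (p * (1 - p))) \<le> W"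
  shows "min (real m * \<bar>p - q\<bar> / (2 * W)) (1/8) \<le> l1_dist m (binomial_pmf m p) (binomial_pmf m q)"
proof -
  obtain n where m: "m = Suc n"
    using \<open>0 < m\<close> gr0_implies_Suc by blast
  define w where "w = ramp (real m * p) W"
  define f' where "f' x = real m * bernstein_poly n (\<lambda>j. w (Suc j) - w j) x" for x
  have deriv: "(bernstein_poly m w has_real_derivative f' x) (at x)" for x
    unfolding f'_def m by (rule bernstein_poly_Suc_has_derivative)
  have "real m / (2 * W) * min \<bar>q - p\<bar> (W / (4 * real m))
      \<le> \<bar>bernstein_poly m w q - bernstein_poly m w p\<bar>"
  proof (rule DERIV_steep_near_imp_abs_diff_ge[OF deriv])
    fix x assume x: "min p q \<le> x" "x \<le> max p q"
    then have "x \<in> {0..1}"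
      using assms(1,2) by auto
    then show "0 \<le> f' x"
      using assms(4) unfolding f'_def w_def
      by (intro mult_nonneg_nonneg bernstein_poly_nonneg) (auto simp: ramp_le_Suc)
    assume "\<bar>x - p\<bar> \<le> W / (4 * real m)"
    then have "real m * \<bar>x - p\<bar> \<le> W / 4"
      using assms(3) by (simp add: field_simps)
    then have "1 / (2 * W) \<le> bernstein_poly n (\<lambda>j. w (Suc j) - w j) x"
      using assms(1,4,5) \<open>x \<in> {0..1}\<close> unfolding w_def m by (intro bernstein_poly_ramp_diff_ge) auto
    from mult_left_mono[OF this, of "real m"] show "real m / (2 * W) \<le> f' x"
      unfolding f'_def by simp
  qed (use assms in simp)
  also have "\<dots> \<le> l1_dist m (binomial_pmf m p) (binomial_pmf m q)"
    using assms(1,2) abs_ramp_le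
    by (subst abs_minus_commute) (intro bernstein_poly_diff_le_l1_dist_binomial, auto simp: w_def)
  finally show ?thesis
    using assms(3,4) by (simp add: min_mult_distrib_left abs_minus_commute field_simps)
qed

section \<open>Comparison with \<open>bin_rate\<close>\<close>

lemma bin_rate_le_linear: "bin_rate m p q \<le> ereal (min (real m * \<bar>p - q\<bar>) 1)"
  by (simp add: bin_rate_def min.coboundedI1 min.coboundedI2 min_le_iff_disj)

lemma bin_rate_interior:
  assumes "0 < p" "p < 1"
  shows "bin_rate m p q
    = ereal (min (real m * \<bar>p - q\<bar>) (min (sqrt (real m) * \<bar>p - q\<bar> / sqrt (p * (1 - p))) 1))"
  using assms by (simp add: bin_rate_def mid_term_def min_def)

lemma bin_rate_boundary:
  assumes "p * (1 - p) = 0"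
  shows "bin_rate m p q = ereal (min (real m * \<bar>p - q\<bar>) 1)"
  using assms by (auto simp: bin_rate_def mid_term_def min_def)

lemma l1_dist_binomial_le_bin_rate:
  assumes "p \<in> {0..1}" "q \<in> {0..1}"
  shows "ereal (l1_dist m (binomial_pmf m p) (binomial_pmf m q)) \<le> ereal 3 * bin_rate m p q"
proof -
  define L where "L = l1_dist m (binomial_pmf m p) (binomial_pmf m q)"
  define a where "a = real m * \<bar>p - q\<bar>"
  have "L \<le> 2 * a" "L \<le> 2" "0 \<le> a"
    using l1_dist_binomial_le_linear[OF assms, of m] l1_dist_le_2
    by (simp_all add: L_def a_def mult.assoc)
  then have lin: "L \<le> 3 * min a 1"
    by (simp add: min_def)
  show ?thesis
  proof (cases "p * (1 - p) = 0")
    case True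
    then show ?thesis
      using lin by (simp add: bin_rate_boundary flip: L_def a_def del: ereal_min)
  next
    case False
    define x where "x = sqrt (real m) * \<bar>p - q\<bar> / sqrt (p * (1 - p))"
    have "0 < p" "p < 1"
      using False assms(1) by auto
    then have "L \<le> 3 * x"
      unfolding L_def x_def using assms(2) by (rule l1_dist_binomial_le_sqrt)
    then have "L \<le> 3 * min a (min x 1)"
      using lin by (simp add: min_def split: if_splits)
    then show ?thesis
      using \<open>0 < p\<close> \<open>p < 1\<close> by (simp add: bin_rate_interior flip: L_def a_def x_def del: ereal_min)
  qed
qed

lemma l1_dist_binomial_ge_bin_rate:
  assumes "0 < m" "p \<in> {0..1}" "q \<in> {0..1}"
  shows "ereal (1/32) * bin_rate m p q \<le> ereal (l1_dist m (binomial_pmf m p) (binomial_pmf m q))"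
proof (cases "8 * sqrt (real m * (p * (1 - p))) \<le> 16")
  case True
  have "ereal (1/32) * bin_rate m p q \<le> ereal (1/32) * ereal (min (real m * \<bar>p - q\<bar>) 1)"
    by (intro ereal_mult_left_mono bin_rate_le_linear) simp
  also have "\<dots> \<le> ereal (min (real m * \<bar>p - q\<bar> / (2 * 16)) (1/8))"
    by (auto simp: min_def simp del: ereal_min)
  also have "\<dots> \<le> ereal (l1_dist m (binomial_pmf m p) (binomial_pmf m q))"
    using assms True by (simp only: ereal_less_eq) (intro l1_dist_binomial_ge, auto)
  finally show ?thesis .
next
  case False
  define W where "W = 8 * sqrt (real m * (p * (1 - p)))"
  define x where "x = sqrt (real m) * \<bar>p - q\<bar> / sqrt (p * (1 - p))"
  have "0 < p * (1 - p)"
    using False assms(2) by (cases "p * (1 - p) = 0") auto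
  then have "0 < p" "p < 1"
    by (auto simp: zero_less_mult_iff)
  have "0 \<le> x"
    using \<open>0 < p * (1 - p)\<close> by (simp add: x_def)
  have "ereal (1/32) * bin_rate m p q \<le> ereal (1/32) * ereal (min x 1)"
    unfolding bin_rate_interior[OF \<open>0 < p\<close> \<open>p < 1\<close>] x_def
    by (intro ereal_mult_left_mono) (auto simp del: ereal_min)
  also have "\<dots> \<le> ereal (min (x / 16) (1/8))"
    using \<open>0 \<le> x\<close> by (auto simp: min_def simp del: ereal_min)
  also have "x / 16 = real m * \<bar>p - q\<bar> / (2 * W)"
  proof -
    define r where "r = sqrt (real m)"
    define \<sigma> where "\<sigma> = sqrt (p * (1 - p))"
    have "0 < r" "0 < \<sigma>"
      using assms(1) \<open>0 < p * (1 - p)\<close> by (auto simp: r_def \<sigma>_def)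
    moreover have "real m = r * r" "W = 8 * (r * \<sigma>)" "x = r * \<bar>p - q\<bar> / \<sigma>"
      by (simp_all add: r_def \<sigma>_def W_def x_def real_sqrt_mult)
    ultimately show ?thesis
      by (simp add: field_simps)
  qed
  also have "ereal (min (real m * \<bar>p - q\<bar> / (2 * W)) (1/8))
      \<le> ereal (l1_dist m (binomial_pmf m p) (binomial_pmf m q))"
    using assms False by (simp only: ereal_less_eq) (intro l1_dist_binomial_ge, auto simp: W_def)
  finally show ?thesis .
qed

theorem theorem5:
  shows "\<exists>c1 c2 :: real. 0 < c1 \<and> c1 \<le> c2 \<and>
    (\<forall>m :: nat. \<forall>p q :: real. 0 < m \<longrightarrow> p \<in> {0..1} \<longrightarrow> q \<in> {0..1} \<longrightarrow>
       ereal c1 * bin_rate m p q \<le> ereal (l1_dist m (binomial_pmf m p) (binomial_pmf m q)) \<and>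
       ereal (l1_dist m (binomial_pmf m p) (binomial_pmf m q)) \<le> ereal c2 * bin_rate m p q)"
  by (intro exI[of _ "1/32"] exI[of _ 3])
    (simp add: l1_dist_binomial_ge_bin_rate l1_dist_binomial_le_bin_rate)

end
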